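(* For each $n\in\mathbb{N}$ let $A_n\subseteq\mathcal{R}$ be L-measurable, with $\lim_{n\to\infty}M(A_n)=0$, and let $X\subseteq\mathcal{R}$ be outer measurable. Then $X\cap\bigcup_{n=1}^\infty A_n$ is outer measurable, the limit $\lim_{N\to\infty}M_u\big(X\cap\bigcup_{n=1}^N A_n\big)$ exists in $\mathcal{R}$, and $$\lim_{N\to\infty}M_u\Big(X\cap\bigcup_{n=1}^N A_n\Big)=M_u\Big(X\cap\bigcup_{n=1}^\infty A_n\Big).$$
   Context: $\mathcal{R}$ denotes the Levi-Civita field: functions $x:\mathbb{Q}\to\mathbb{R}$ with left-finite support, with componentwise addition and formal power series multiplication, ordered by $x>0$ iff $x\ne0$ and $x[\min\operatorname{supp}x]>0$; it is a non-Archimedean ordered field extension of $\mathbb{R}$, Cauchy complete in the order topology, in which all limits and series are taken (a series $\sum a_n$ converges iff $a_n\to0$). An interval is a set $[a,b],[a,b),(a,b]$ or $(a,b)$ with $a<b$ in $\mathcal{R}$, of length $l=b-a$. A cover of $A\subseteq\mathcal{R}$ is a sequence of intervals $(S_n)_{n\ge1}$ with $A\subseteq\bigcup_n S_n$ and $\sum_n l(S_n)$ convergent in $\mathcal{R}$. $A$ is called outer measurable if the infimum $\inf\{\sum_n l(S_n): (S_n)\text{ a cover of }A\}$ exists in $\mathcal{R}$; this infimum is then called the outer measure $M_u(A)$. An outer measurable set $A\subseteq\mathcal{R}$ is L-measurable if for every outer measurable $B\subseteq\mathcal{R}$ both $A\cap B$ and $A^c\cap B$ (where $A^c=\mathcal{R}\setminus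 A$) are outer measurable and $M_u(B)=M_u(A\cap B)+M_u(A^c\cap B)$; then its L-measure is $M(A):=M_u(A)$. *)

theory Defs
  imports Complex_Main
begin

section \<open>The Levi-Civita field\<close>

typedef lc = "{x :: rat \<Rightarrow> real. \<forall>q. finite {p. p \<le> q \<and> x p \<noteq> 0}}"
  by (rule exI[of _ "\<lambda>_. 0"]) simp

setup_lifting type_definition_lc

instantiation lc :: "{zero, one, plus, uminus, minus, times, ord}"
begin

definition zero_lc :: lc where "zero_lc = Abs_lc (\<lambda>_. 0)"
definition one_lc :: lc where "one_lc = Abs_lc (\<lambda>q. if q = 0 then 1 else 0)"
definition plus_lc :: "lc \<Rightarrow> lc \<Rightarrow> lc" where
  "plus_lc x y = Abs_lc (\<lambda>q. Rep_lc x q + Rep_lc y q)"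
definition uminus_lc :: "lc \<Rightarrow> lc" where
  "uminus_lc x = Abs_lc (\<lambda>q. - Rep_lc x q)"
definition minus_lc :: "lc \<Rightarrow> lc \<Rightarrow> lc" where
  "minus_lc x y = Abs_lc (\<lambda>q. Rep_lc x q - Rep_lc y q)"
text \<open>Formal power series (Cauchy) product; the sum is finite by left-finiteness.\<close>
definition times_lc :: "lc \<Rightarrow> lc \<Rightarrow> lc" where
  "times_lc x y = Abs_lc (\<lambda>q. \<Sum>pr\<in>{(p, r). p + r = q \<and> Rep_lc x p \<noteq> 0 \<and> Rep_lc y r \<noteq> 0}.
                                    Rep_lc x (fst pr) * Rep_lc y (snd pr))"

definition lc_pos :: "lc \<Rightarrow> bool" where
  "lc_pos x \<longleftrightarrow> (\<exists>q. 0 < Rep_lc x q \<and> (\<forall>p<q. Rep_lc x p = 0))"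

definition less_lc :: "lc \<Rightarrow> lc \<Rightarrow> bool" where
  "less_lc x y \<longleftrightarrow> lc_pos (y - x)"
definition less_eq_lc :: "lc \<Rightarrow> lc \<Rightarrow> bool" where
  "less_eq_lc x y \<longleftrightarrow> x < y \<or> x = y"

instance ..
end

definition lc_tendsto :: "(nat \<Rightarrow> lc) \<Rightarrow> lc \<Rightarrow> bool" where
  "lc_tendsto X L \<longleftrightarrow> (\<forall>e::lc. 0 < e \<longrightarrow> (\<exists>N. \<forall>n\<ge>N. L - e < X n \<and> X n < L + e))"

primrec lc_psum :: "(nat \<Rightarrow> lc) \<Rightarrow> nat \<Rightarrow> lc" where
  "lc_psum f 0 = 0"
| "lc_psum f (Suc N) = lc_psum f N + f N"

definition lc_sums :: "(nat \<Rightarrow> lc) \<Rightarrow> lc \<Rightarrow> bool" where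
  "lc_sums f s \<longleftrightarrow> lc_tendsto (lc_psum f) s"

definition lc_interval :: "lc \<Rightarrow> lc \<Rightarrow> lc set \<Rightarrow> bool" where
  "lc_interval a b S \<longleftrightarrow> a < b \<and>
     (S = {a..b} \<or> S = {a..<b} \<or> S = {a<..b} \<or> S = {a<..<b})"

definition lc_cover :: "lc set \<Rightarrow> (nat \<Rightarrow> lc) \<Rightarrow> (nat \<Rightarrow> lc) \<Rightarrow> (nat \<Rightarrow> lc set) \<Rightarrow> bool" where
  "lc_cover A a b S \<longleftrightarrow> (\<forall>n. lc_interval (a n) (b n) (S n)) \<and> A \<subseteq> (\<Union>n. S n)
      \<and> (\<exists>s. lc_sums (\<lambda>n. b n - a n) s)"

definition cover_lengths :: "lc set \<Rightarrow> lc set" where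
  "cover_lengths A = {s. \<exists>a b S. lc_cover A a b S \<and> lc_sums (\<lambda>n. b n - a n) s}"

definition lc_is_inf :: "lc set \<Rightarrow> lc \<Rightarrow> bool" where
  "lc_is_inf T m \<longleftrightarrow> (\<forall>t\<in>T. m \<le> t) \<and> (\<forall>m'. (\<forall>t\<in>T. m' \<le> t) \<longrightarrow> m' \<le> m)"

definition outer_measurable :: "lc set \<Rightarrow> bool" where
  "outer_measurable A \<longleftrightarrow> (\<exists>m. lc_is_inf (cover_lengths A) m)"

definition Mu :: "lc set \<Rightarrow> lc" where
  "Mu A = (THE m. lc_is_inf (cover_lengths A) m)"

definition L_measurable :: "lc set \<Rightarrow> bool" where
  "L_measurable A \<longleftrightarrow> outer_measurable A \<and>
     (\<forall>B. outer_measurable B \<longrightarrow>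
        outer_measurable (A \<inter> B) \<and> outer_measurable (- A \<inter> B) \<and>
        Mu B = Mu (A \<inter> B) + Mu (- A \<inter> B))"

definition M :: "lc set \<Rightarrow> lc" where
  "M A = Mu A"

end

theory Submission
  imports Defs "HOL-Library.Nat_Bijection"
begin

text \<open>In the Levi-Civita field an element is small in the order topology exactly when its
  coefficients vanish up to a large exponent, so limits can be handled coefficientwise; the
  field is Cauchy complete, and a series converges as soon as its terms tend to \<open>0\<close>.
  Caratheodory measurability is stable under finite unions, so \<open>X\<close> splits along
  \<open>U\<^sub>N = A\<^sub>1 \<union> \<dots> \<union> A\<^sub>N\<close> and the measures \<open>m\<^sub>N\<close> of \<open>X \<inter> U\<^sub>N\<close> increase by at
  most \<open>M(A\<^sub>N\<^sub>+\<^sub>1) \<longrightarrow> 0\<close>. Hence \<open>(m\<^sub>N)\<close> is Cauchy and has a limit \<open>L\<close>, which is a lower bound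
  for the length of every cover of \<open>X \<inter> \<Union>\<^sub>n A\<^sub>n\<close>. Conversely, gluing a near-optimal cover of
  \<open>X \<inter> U\<^sub>N\<close> with near-optimal covers of \<open>A\<^sub>N\<^sub>+\<^sub>1, A\<^sub>N\<^sub>+\<^sub>2, \<dots>\<close> gives covers of length at most
  \<open>L\<close> plus an arbitrarily small monomial: their lengths form a null sequence, so the glued
  series converges, and once \<open>N\<close> is large the tail contributes less than any prescribed
  monomial. So \<open>L\<close> is the infimum of the cover lengths.\<close>

section \<open>The ordered additive group of the Levi-Civita field\<close>

lemma finite_support_below: "finite {p. p \<le> q \<and> Rep_lc x p \<noteq> 0}"
  using Rep_lc[of x] by auto

lemma Rep_lc_zero: "Rep_lc 0 = (\<lambda>_. 0)"
  unfolding zero_lc_def by (rule Abs_lc_inverse) auto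

lemma Rep_lc_plus: "Rep_lc (x + y) = (\<lambda>q. Rep_lc x q + Rep_lc y q)"
  unfolding plus_lc_def
proof (rule Abs_lc_inverse, safe)
  fix q
  have "{p. p \<le> q \<and> Rep_lc x p + Rep_lc y p \<noteq> 0}
      \<subseteq> {p. p \<le> q \<and> Rep_lc x p \<noteq> 0} \<union> {p. p \<le> q \<and> Rep_lc y p \<noteq> 0}"
    by auto
  then show "finite {p. p \<le> q \<and> Rep_lc x p + Rep_lc y p \<noteq> 0}"
    using finite_support_below finite_subset by blast
qed

lemma Rep_lc_uminus: "Rep_lc (- x) = (\<lambda>q. - Rep_lc x q)"
  unfolding uminus_lc_def by (rule Abs_lc_inverse) (simp add: finite_support_below)

lemma Rep_lc_minus: "Rep_lc (x - y) = (\<lambda>q. Rep_lc x q - Rep_lc y q)"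
  unfolding minus_lc_def
proof (rule Abs_lc_inverse, safe)
  fix q
  have "{p. p \<le> q \<and> Rep_lc x p - Rep_lc y p \<noteq> 0}
      \<subseteq> {p. p \<le> q \<and> Rep_lc x p \<noteq> 0} \<union> {p. p \<le> q \<and> Rep_lc y p \<noteq> 0}"
    by auto
  then show "finite {p. p \<le> q \<and> Rep_lc x p - Rep_lc y p \<noteq> 0}"
    using finite_support_below finite_subset by blast
qed

lemma lc_eqI: "(\<And>q. Rep_lc x q = Rep_lc y q) \<Longrightarrow> x = y"
  using Rep_lc_inject by (metis ext)

instance lc :: ab_group_add
  by standard (auto intro!: lc_eqI simp: Rep_lc_plus Rep_lc_uminus Rep_lc_minus Rep_lc_zero)

lemma lc_leading_exponent:
  assumes "z \<noteq> 0"
  shows "\<exists>q. Rep_lc z q \<noteq> 0 \<and> (\<forall>p<q. Rep_lc z p = 0)"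
proof -
  obtain p0 where p0: "Rep_lc z p0 \<noteq> 0"
    using assms lc_eqI[of z 0] by (auto simp: Rep_lc_zero)
  define F where "F = {p. p \<le> p0 \<and> Rep_lc z p \<noteq> 0}"
  have fin: "finite F" and "F \<noteq> {}"
    using p0 finite_support_below unfolding F_def by auto
  then have min: "Min F \<in> F"
    by simp
  have "Rep_lc z p = 0" if "p < Min F" for p
  proof (rule ccontr)
    assume "Rep_lc z p \<noteq> 0"
    with that min have "p \<in> F"
      unfolding F_def by auto
    with fin that show False
      using Min_le leD by blast
  qed
  with min show ?thesis
    unfolding F_def by blast
qed

lemma not_lc_pos_zero: "\<not> lc_pos 0"
  by (auto simp: lc_pos_def Rep_lc_zero)

lemma lc_pos_trichotomy: "z = 0 \<or> lc_pos z \<or> lc_pos (- z)"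
proof (cases "z = 0")
  case False
  then obtain q where q: "Rep_lc z q \<noteq> 0" "\<forall>p<q. Rep_lc z p = 0"
    using lc_leading_exponent by blast
  show ?thesis
  proof (cases "Rep_lc z q > 0")
    case True
    then show ?thesis using q by (auto simp: lc_pos_def)
  next
    case False
    then have "Rep_lc (- z) q > 0" using q by (auto simp: Rep_lc_uminus)
    then show ?thesis using q by (auto simp: lc_pos_def Rep_lc_uminus)
  qed
qed simp

lemma lc_pos_not_both: "lc_pos z \<Longrightarrow> \<not> lc_pos (- z)"
proof
  assume "lc_pos z" "lc_pos (- z)"
  then obtain q1 q2 where "0 < Rep_lc z q1" "\<forall>p<q1. Rep_lc z p = 0"
    and "Rep_lc z q2 < 0" "\<forall>p<q2. Rep_lc z p = 0"
    by (auto simp: lc_pos_def Rep_lc_uminus)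
  then show False
    by (cases q1 q2 rule: linorder_cases) force+
qed

lemma lc_pos_add:
  assumes "lc_pos a" "lc_pos b"
  shows "lc_pos (a + b)"
proof -
  obtain q1 q2 where q1: "0 < Rep_lc a q1" "\<forall>p<q1. Rep_lc a p = 0"
    and q2: "0 < Rep_lc b q2" "\<forall>p<q2. Rep_lc b p = 0"
    using assms by (auto simp: lc_pos_def)
  show ?thesis
    unfolding lc_pos_def Rep_lc_plus
    by (rule exI[of _ "min q1 q2"]) (use q1 q2 in \<open>cases q1 q2 rule: linorder_cases; auto\<close>)
qed

instance lc :: linordered_ab_group_add
proof
  fix x y z :: lc
  show "(x < y) = (x \<le> y \<and> \<not> y \<le> x)"
    unfolding less_eq_lc_def less_lc_def
    by (metis lc_pos_not_both not_lc_pos_zero minus_diff_eq diff_self)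
  show "x \<le> x"
    by (simp add: less_eq_lc_def)
  show "x \<le> y \<Longrightarrow> y \<le> z \<Longrightarrow> x \<le> z"
    unfolding less_eq_lc_def less_lc_def
    by (metis lc_pos_add diff_add_cancel add.commute add_diff_eq)
  show "x \<le> y \<Longrightarrow> y \<le> x \<Longrightarrow> x = y"
    unfolding less_eq_lc_def less_lc_def
    by (metis lc_pos_not_both minus_diff_eq)
  show "x \<le> y \<Longrightarrow> z + x \<le> z + y"
    unfolding less_eq_lc_def less_lc_def by simp
  show "x \<le> y \<or> y \<le> x"
    unfolding less_eq_lc_def less_lc_def
    by (metis lc_pos_trichotomy minus_diff_eq eq_iff_diff_eq_0)
qed

lemma less_lc_iff: "x < y \<longleftrightarrow> lc_pos (y - x)"
  by (simp add: less_lc_def)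

section \<open>Coefficientwise smallness and convergence\<close>

definition vanishes_upto :: "rat \<Rightarrow> lc \<Rightarrow> bool" where
  "vanishes_upto q y \<longleftrightarrow> (\<forall>p\<le>q. Rep_lc y p = 0)"

lemma vanishes_upto_zero [simp]: "vanishes_upto q 0"
  by (simp add: vanishes_upto_def Rep_lc_zero)

lemma vanishes_upto_add: "vanishes_upto q x \<Longrightarrow> vanishes_upto q y \<Longrightarrow> vanishes_upto q (x + y)"
  by (simp add: vanishes_upto_def Rep_lc_plus)

lemma vanishes_upto_diff: "vanishes_upto q x \<Longrightarrow> vanishes_upto q y \<Longrightarrow> vanishes_upto q (x - y)"
  by (simp add: vanishes_upto_def Rep_lc_minus)

lemma vanishes_upto_minus_iff [simp]: "vanishes_upto q (- x) \<longleftrightarrow> vanishes_upto q x"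
  by (simp add: vanishes_upto_def Rep_lc_uminus)

lemma vanishes_upto_anti_mono: "vanishes_upto q x \<Longrightarrow> q' \<le> q \<Longrightarrow> vanishes_upto q' x"
  by (simp add: vanishes_upto_def)

lemma vanishes_upto_sum: "(\<And>x. x \<in> A \<Longrightarrow> vanishes_upto q (f x)) \<Longrightarrow> vanishes_upto q (sum f A)"
  by (induction A rule: infinite_finite_induct) (auto intro: vanishes_upto_add)

definition lc_monomial :: "rat \<Rightarrow> lc" where
  "lc_monomial q = Abs_lc (\<lambda>p. if p = q then 1 else 0)"

lemma Rep_lc_monomial: "Rep_lc (lc_monomial q) = (\<lambda>p. if p = q then 1 else 0)"
  unfolding lc_monomial_def
proof (rule Abs_lc_inverse, safe)
  fix r
  have "{p. p \<le> r \<and> (if p = q then 1 else 0) \<noteq> (0::real)} \<subseteq> {q}"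
    by auto
  then show "finite {p. p \<le> r \<and> (if p = q then 1 else 0) \<noteq> (0::real)}"
    using finite_subset by blast
qed

lemma vanishes_upto_monomial: "q < r \<Longrightarrow> vanishes_upto q (lc_monomial r)"
  by (simp add: vanishes_upto_def Rep_lc_monomial)

lemma less_monomial_if_vanishes_upto: "vanishes_upto q y \<Longrightarrow> y < lc_monomial q"
  unfolding less_lc_iff lc_pos_def
  by (intro exI[of _ q]) (auto simp: vanishes_upto_def Rep_lc_minus Rep_lc_monomial)

lemma lc_monomial_pos: "0 < lc_monomial q"
  using less_monomial_if_vanishes_upto[of q 0] by simp

lemma ex_vanishes_upto_less:
  assumes "0 < e"
  obtains q where "\<And>y. vanishes_upto q y \<Longrightarrow> y < e"
proof -
  obtain q where q: "0 < Rep_lc e q" "\<forall>p<q. Rep_lc e p = 0"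
    using assms unfolding less_lc_iff lc_pos_def by (auto simp: Rep_lc_minus Rep_lc_zero)
  have "y < e" if "vanishes_upto q y" for y
    unfolding less_lc_iff lc_pos_def
    by (rule exI[of _ q]) (use q that in \<open>auto simp: vanishes_upto_def Rep_lc_minus\<close>)
  then show ?thesis
    using that by blast
qed

lemma le_if_le_add_monomial:
  assumes "\<And>q. x \<le> y + lc_monomial q"
  shows "x \<le> y"
proof (rule ccontr)
  assume "\<not> x \<le> y"
  then have "0 < x - y"
    by simp
  then obtain q where "\<And>z. vanishes_upto q z \<Longrightarrow> z < x - y"
    using ex_vanishes_upto_less by blast
  then have "lc_monomial (q + 1) < x - y"
    using vanishes_upto_monomial by simp
  then show False
    using assms[of "q + 1"] by (simp add: algebra_simps)
qed

lemma monomial_add_self_less: "lc_monomial (q + 1) + lc_monomial (q + 1) < lc_monomial q"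
  by (intro less_monomial_if_vanishes_upto vanishes_upto_add vanishes_upto_monomial) simp_all

lemma vanishes_upto_if_nonneg_le:
  assumes "0 \<le> x" "x \<le> z" "vanishes_upto q z"
  shows "vanishes_upto q x"
proof (rule ccontr)
  assume "\<not> vanishes_upto q x"
  then obtain p where p: "p \<le> q" "Rep_lc x p \<noteq> 0"
    by (auto simp: vanishes_upto_def)
  then have "x \<noteq> 0"
    by (auto simp: Rep_lc_zero)
  with assms(1) have "0 < x"
    by simp
  then obtain q1 where q1: "0 < Rep_lc x q1" "\<forall>p<q1. Rep_lc x p = 0"
    unfolding less_lc_iff lc_pos_def by (auto simp: Rep_lc_minus Rep_lc_zero)
  have "q1 \<le> q"
    using p q1 by (meson not_le order_trans)
  have "z < x"
    unfolding less_lc_iff lc_pos_def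
    by (rule exI[of _ q1]) (use q1 \<open>q1 \<le> q\<close> assms(3) in \<open>auto simp: Rep_lc_minus vanishes_upto_def\<close>)
  then show False
    using assms by simp
qed

lemma vanishes_upto_if_bounded_by_monomial:
  assumes "y < lc_monomial r" "- lc_monomial r < y" "q < r"
  shows "vanishes_upto q y"
proof (rule ccontr)
  assume "\<not> vanishes_upto q y"
  then obtain p where p: "p \<le> q" "Rep_lc y p \<noteq> 0"
    by (auto simp: vanishes_upto_def)
  then have "y \<noteq> 0"
    by (auto simp: Rep_lc_zero)
  then obtain p1 where p1: "Rep_lc y p1 \<noteq> 0" "\<forall>p<p1. Rep_lc y p = 0"
    using lc_leading_exponent by blast
  have "p1 < r"
    using p p1 assms(3) by (meson le_less_trans not_le)
  show False
  proof (cases "Rep_lc y p1 > 0")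
    case True
    have "lc_monomial r < y"
      unfolding less_lc_iff lc_pos_def
      by (rule exI[of _ p1]) (use p1 True \<open>p1 < r\<close> in \<open>auto simp: Rep_lc_minus Rep_lc_monomial\<close>)
    then show False
      using assms by simp
  next
    case False
    have "y < - lc_monomial r"
      unfolding less_lc_iff lc_pos_def
      by (rule exI[of _ p1])
        (use p1 False \<open>p1 < r\<close> in \<open>auto simp: Rep_lc_minus Rep_lc_monomial Rep_lc_uminus\<close>)
    then show False
      using assms by simp
  qed
qed

definition lc_null :: "(nat \<Rightarrow> lc) \<Rightarrow> bool" where
  "lc_null f \<longleftrightarrow> (\<forall>q. \<exists>N. \<forall>n\<ge>N. vanishes_upto q (f n))"

lemma lc_tendsto_iff_null: "lc_tendsto X L \<longleftrightarrow> lc_null (\<lambda>n. X n - L)"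
proof
  assume lim: "lc_tendsto X L"
  show "lc_null (\<lambda>n. X n - L)"
    unfolding lc_null_def
  proof
    fix q
    obtain N where "\<forall>n\<ge>N. L - lc_monomial (q + 1) < X n \<and> X n < L + lc_monomial (q + 1)"
      using lim lc_monomial_pos unfolding lc_tendsto_def by blast
    then have "\<forall>n\<ge>N. vanishes_upto q (X n - L)"
      by (auto intro!: vanishes_upto_if_bounded_by_monomial[of _ "q + 1"] simp: algebra_simps)
    then show "\<exists>N. \<forall>n\<ge>N. vanishes_upto q (X n - L)"
      by blast
  qed
next
  assume null: "lc_null (\<lambda>n. X n - L)"
  show "lc_tendsto X L"
    unfolding lc_tendsto_def
  proof (intro allI impI)
    fix e :: lc
    assume "0 < e"
    then obtain q where q: "\<And>y. vanishes_upto q y \<Longrightarrow> y < e"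
      using ex_vanishes_upto_less by blast
    obtain N where N: "\<forall>n\<ge>N. vanishes_upto q (X n - L)"
      using null unfolding lc_null_def by blast
    have "X n - L < e \<and> - (X n - L) < e" if "n \<ge> N" for n
      using N q that vanishes_upto_minus_iff by blast
    then show "\<exists>N. \<forall>n\<ge>N. L - e < X n \<and> X n < L + e"
      by (auto simp: algebra_simps)
  qed
qed

lemma lc_null_add: "lc_null f \<Longrightarrow> lc_null g \<Longrightarrow> lc_null (\<lambda>n. f n + g n)"
  unfolding lc_null_def by (metis vanishes_upto_add le_trans max.cobounded1 max.cobounded2)

lemma lc_null_if_nonneg_le:
  assumes "\<And>n. 0 \<le> f n" "\<And>n. f n \<le> g n" "lc_null g"
  shows "lc_null f"
  using assms vanishes_upto_if_nonneg_le unfolding lc_null_def by metis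

lemma lc_null_if_vanishes_upto_shifted:
  assumes "\<And>n. n \<ge> k \<Longrightarrow> vanishes_upto (q + of_nat n) (f n)"
  shows "lc_null f"
  unfolding lc_null_def
proof
  fix r
  obtain N :: nat where "r - q < of_nat N"
    using reals_Archimedean2 by blast
  then have "vanishes_upto r (f n)" if "n \<ge> N + k" for n
    using assms[of n] that vanishes_upto_anti_mono[of "q + of_nat n" "f n" r]
    by (simp add: of_nat_mono)
  then show "\<exists>N. \<forall>n\<ge>N. vanishes_upto r (f n)"
    by blast
qed

lemma lc_null_case_nat:
  assumes "lc_null f"
  shows "lc_null (case_nat x (\<lambda>i. f (N + i)))"
  unfolding lc_null_def
proof
  fix r
  obtain M where "\<And>n. n \<ge> M \<Longrightarrow> vanishes_upto r (f n)"
    using assms unfolding lc_null_def by blast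
  then have "vanishes_upto r (case_nat x (\<lambda>i. f (N + i)) i)" if "i \<ge> Suc M" for i
    using that by (cases i) auto
  then show "\<exists>M. \<forall>i\<ge>M. vanishes_upto r (case_nat x (\<lambda>i. f (N + i)) i)"
    by blast
qed

lemma lc_tendsto_le_bound:
  assumes "lc_tendsto X L" "\<And>n. n \<ge> N \<Longrightarrow> X n \<le> c"
  shows "L \<le> c"
proof (rule ccontr)
  assume "\<not> L \<le> c"
  then have "0 < L - c"
    by simp
  then obtain N' where "\<forall>n\<ge>N'. L - (L - c) < X n"
    using assms(1) unfolding lc_tendsto_def by blast
  then have "c < X (max N N')"
    by simp
  then show False
    using assms(2)[of "max N N'"] by simp
qed

lemma lc_tendsto_ge_bound:
  assumes "lc_tendsto X L" "\<And>n. n \<ge> N \<Longrightarrow> c \<le> X n"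
  shows "c \<le> L"
proof (rule ccontr)
  assume "\<not> c \<le> L"
  then have "0 < c - L"
    by simp
  then obtain N' where "\<forall>n\<ge>N'. X n < L + (c - L)"
    using assms(1) unfolding lc_tendsto_def by blast
  then have "X (max N N') < c"
    by simp
  then show False
    using assms(2)[of "max N N'"] by simp
qed

lemma vanishes_upto_limit:
  assumes "lc_tendsto X L" "\<And>n. vanishes_upto q (X n)"
  shows "vanishes_upto q L"
proof -
  obtain N where "vanishes_upto q (X N - L)"
    using assms(1) unfolding lc_tendsto_iff_null lc_null_def by blast
  then have "vanishes_upto q (X N - (X N - L))"
    using assms(2) vanishes_upto_diff by blast
  then show ?thesis
    by simp
qed

text \<open>Cauchy completeness: the limit is assembled coefficientwise, the coefficient at \<open>p\<close>
  being the eventually constant value of the coefficients at \<open>p\<close>.\<close>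
lemma lc_Cauchy_convergent:
  assumes "\<forall>q. \<exists>N. \<forall>i\<ge>N. \<forall>j\<ge>N. vanishes_upto q (X i - X j)"
  shows "\<exists>L. lc_tendsto X L"
proof -
  obtain N where N: "\<And>q i j. i \<ge> N q \<Longrightarrow> j \<ge> N q \<Longrightarrow> vanishes_upto q (X i - X j)"
    using assms by metis
  define f where "f p = Rep_lc (X (N p)) p" for p
  have stable: "f p = Rep_lc (X n) p" if "p \<le> q" "n \<ge> N q" for p q n
  proof -
    have "Rep_lc (X (max n (N p))) p = Rep_lc (X (N p)) p"
      using N[of p "max n (N p)" "N p"] by (simp add: vanishes_upto_def Rep_lc_minus)
    moreover have "Rep_lc (X (max n (N p))) p = Rep_lc (X n) p"
      using N[of q "max n (N p)" n] that by (simp add: vanishes_upto_def Rep_lc_minus)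
    ultimately show ?thesis
      unfolding f_def by simp
  qed
  have "finite {p. p \<le> q \<and> f p \<noteq> 0}" for q
  proof -
    have "{p. p \<le> q \<and> f p \<noteq> 0} = {p. p \<le> q \<and> Rep_lc (X (N q)) p \<noteq> 0}"
      using stable[of _ q "N q"] by auto
    then show ?thesis
      using finite_support_below by simp
  qed
  then have "Rep_lc (Abs_lc f) = f"
    by (intro Abs_lc_inverse) auto
  then have "vanishes_upto q (X n - Abs_lc f)" if "n \<ge> N q" for q n
    using stable[OF _ that] by (simp add: vanishes_upto_def Rep_lc_minus)
  then have "lc_tendsto X (Abs_lc f)"
    unfolding lc_tendsto_iff_null lc_null_def by blast
  then show ?thesis
    by blast
qed

lemma vanishes_upto_diff_if_increments:
  assumes "\<And>n. n \<ge> N \<Longrightarrow> vanishes_upto q (g (Suc n) - g n)" "i \<ge> N" "j \<ge> N"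
  shows "vanishes_upto q (g i - g j)"
proof -
  have from_N: "vanishes_upto q (g k - g N)" if "k \<ge> N" for k
    using that
  proof (induction k rule: dec_induct)
    case (step k)
    have "g (Suc k) - g N = (g (Suc k) - g k) + (g k - g N)"
      by simp
    then show ?case
      using step assms(1) vanishes_upto_add by metis
  qed simp
  have "g i - g j = (g i - g N) - (g j - g N)"
    by simp
  then show ?thesis
    using from_N assms vanishes_upto_diff by metis
qed

lemma lc_psum_eq_sum: "lc_psum f n = sum f {..<n}"
  by (induction n) (auto simp: add.commute)

lemma lc_sums_if_null: "lc_null f \<Longrightarrow> \<exists>s. lc_sums f s"
  unfolding lc_sums_def lc_null_def
  by (rule lc_Cauchy_convergent) (metis vanishes_upto_diff_if_increments lc_psum.simps(2) add_diff_cancel_left')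

lemma lc_null_if_sums:
  assumes "lc_sums f s"
  shows "lc_null f"
  unfolding lc_null_def
proof
  fix q
  obtain N where N: "\<And>n. n \<ge> N \<Longrightarrow> vanishes_upto q (lc_psum f n - s)"
    using assms unfolding lc_sums_def lc_tendsto_iff_null lc_null_def by blast
  have "f n = (lc_psum f (Suc n) - s) - (lc_psum f n - s)" for n
    by simp
  then have "vanishes_upto q (f n)" if "n \<ge> N" for n
    using N that vanishes_upto_diff by (metis le_Suc_eq)
  then show "\<exists>N. \<forall>n\<ge>N. vanishes_upto q (f n)"
    by blast
qed

lemma lc_psum_le_sums:
  assumes "lc_sums f s" "\<And>n. 0 \<le> f n"
  shows "lc_psum f n \<le> s"
proof (rule lc_tendsto_ge_bound)
  show "lc_tendsto (lc_psum f) s"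
    using assms(1) unfolding lc_sums_def .
  show "lc_psum f n \<le> lc_psum f m" if "m \<ge> n" for m
    unfolding lc_psum_eq_sum by (rule sum_mono2) (use that assms(2) in auto)
qed

lemma term_le_lc_sums:
  assumes "lc_sums f s" "\<And>n. 0 \<le> f n"
  shows "f n \<le> s"
proof -
  have "f n \<le> lc_psum f (Suc n)"
    unfolding lc_psum_eq_sum using sum_mono2[of "{..<Suc n}" "{n}" f] by (auto simp: assms(2))
  then show ?thesis
    using lc_psum_le_sums[OF assms] order_trans by blast
qed

section \<open>Outer measure\<close>

lemma cover_length_pos: "lc_cover A a b S \<Longrightarrow> 0 < b n - a n"
  unfolding lc_cover_def lc_interval_def by auto

lemma cover_lengths_nonneg:
  assumes "s \<in> cover_lengths A"
  shows "0 \<le> s"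
proof -
  obtain a b S where cover: "lc_cover A a b S" and sums: "lc_sums (\<lambda>n. b n - a n) s"
    using assms unfolding cover_lengths_def by blast
  have "0 \<le> b n - a n" for n
    using cover_length_pos[OF cover] by (rule less_imp_le)
  then show ?thesis
    using lc_psum_le_sums[OF sums, of 0] by simp
qed

lemma cover_lengths_antimono: "A \<subseteq> B \<Longrightarrow> cover_lengths B \<subseteq> cover_lengths A"
  unfolding cover_lengths_def lc_cover_def by blast

lemma lc_is_inf_unique: "lc_is_inf T m \<Longrightarrow> lc_is_inf T m' \<Longrightarrow> m = m'"
  unfolding lc_is_inf_def by (meson order.antisym)

lemma Mu_is_inf: "outer_measurable A \<Longrightarrow> lc_is_inf (cover_lengths A) (Mu A)"
  unfolding outer_measurable_def Mu_def by (metis lc_is_inf_unique theI)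

lemma Mu_eqI: "lc_is_inf (cover_lengths A) m \<Longrightarrow> Mu A = m"
  unfolding Mu_def by (metis lc_is_inf_unique the_equality)

lemma Mu_le_cover_length: "outer_measurable A \<Longrightarrow> s \<in> cover_lengths A \<Longrightarrow> Mu A \<le> s"
  using Mu_is_inf unfolding lc_is_inf_def by blast

lemma Mu_nonneg: "outer_measurable A \<Longrightarrow> 0 \<le> Mu A"
  using Mu_is_inf cover_lengths_nonneg unfolding lc_is_inf_def by blast

lemma Mu_mono: "outer_measurable A \<Longrightarrow> outer_measurable B \<Longrightarrow> A \<subseteq> B \<Longrightarrow> Mu A \<le> Mu B"
  using Mu_is_inf[of A] Mu_is_inf[of B] cover_lengths_antimono[of A B]
  unfolding lc_is_inf_def by blast

lemma cover_length_near_Mu: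
  assumes "outer_measurable A"
  shows "\<exists>s\<in>cover_lengths A. s < Mu A + lc_monomial q"
proof (rule ccontr)
  assume "\<not> ?thesis"
  then have "Mu A + lc_monomial q \<le> Mu A"
    using Mu_is_inf[OF assms] unfolding lc_is_inf_def by (auto simp: not_less)
  then show False
    using lc_monomial_pos[of q] by simp
qed

lemma outer_measurable_MuI:
  assumes "\<And>s. s \<in> cover_lengths A \<Longrightarrow> m \<le> s"
    and "\<And>q. \<exists>s\<in>cover_lengths A. s \<le> m + lc_monomial q"
  shows "outer_measurable A \<and> Mu A = m"
proof -
  have "m' \<le> m" if m': "\<forall>t\<in>cover_lengths A. m' \<le> t" for m'
  proof (rule le_if_le_add_monomial)
    fix q
    obtain s where "s \<in> cover_lengths A" "s \<le> m + lc_monomial q"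
      using assms(2) by blast
    then show "m' \<le> m + lc_monomial q"
      using m' order_trans by blast
  qed
  then have "lc_is_inf (cover_lengths A) m"
    unfolding lc_is_inf_def using assms(1) by blast
  then show ?thesis
    using Mu_eqI unfolding outer_measurable_def by blast
qed

text \<open>Covers consist of intervals of positive length, so even for the empty set the
  infimum \<open>0\<close> is only approached, here by the intervals \<open>[0, d\<^sup>q\<^sup>+\<^sup>1\<^sup>+\<^sup>n]\<close>.\<close>
lemma cover_lengths_empty_vanishing: "\<exists>s\<in>cover_lengths {}. vanishes_upto q s"
proof -
  define b where "b n = lc_monomial (q + 1 + of_nat n)" for n :: nat
  have "lc_null (\<lambda>n. b n - 0)"
    unfolding b_def by (rule lc_null_if_vanishes_upto_shifted[of 0 q]) (simp add: vanishes_upto_monomial)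
  then obtain s where s: "lc_sums (\<lambda>n. b n - 0) s"
    using lc_sums_if_null by blast
  have "vanishes_upto q (lc_psum (\<lambda>n. b n - 0) n)" for n
    unfolding lc_psum_eq_sum b_def
    by (intro vanishes_upto_sum) (simp add: vanishes_upto_monomial add_pos_nonneg)
  moreover have "lc_tendsto (lc_psum (\<lambda>n. b n - 0)) s"
    using s unfolding lc_sums_def .
  ultimately have "vanishes_upto q s"
    using vanishes_upto_limit by blast
  moreover have "lc_cover {} (\<lambda>_. 0) b (\<lambda>n. {0..b n})"
    using s lc_monomial_pos unfolding lc_cover_def lc_interval_def b_def by blast
  ultimately show ?thesis
    unfolding cover_lengths_def using s by blast
qed

lemma outer_measurable_empty: "outer_measurable {}" and Mu_empty: "Mu {} = 0"
proof -
  have "\<exists>s\<in>cover_lengths {}. s \<le> 0 + lc_monomial q" for q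
    using cover_lengths_empty_vanishing[of q] less_monomial_if_vanishes_upto by (auto intro: less_imp_le)
  then have "outer_measurable {} \<and> Mu {} = 0"
    using outer_measurable_MuI cover_lengths_nonneg by blast
  then show "outer_measurable {}" "Mu {} = 0"
    by blast+
qed

section \<open>Gluing countably many covers\<close>

definition diagonal_seq :: "(nat \<Rightarrow> nat \<Rightarrow> 'a) \<Rightarrow> nat \<Rightarrow> 'a" where
  "diagonal_seq f j = case_prod f (prod_decode j)"

lemma lc_null_diagonal_seq:
  fixes len :: "nat \<Rightarrow> nat \<Rightarrow> lc"
  assumes nonneg: "\<And>i n. 0 \<le> len i n" and sums: "\<And>i. lc_sums (len i) (\<sigma> i)"
    and null: "lc_null \<sigma>"
  shows "lc_null (diagonal_seq len)"
  unfolding lc_null_def diagonal_seq_def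
proof
  fix q
  obtain I where I: "\<And>i. i \<ge> I \<Longrightarrow> vanishes_upto q (\<sigma> i)"
    using null unfolding lc_null_def by blast
  have "\<forall>i. \<exists>K. \<forall>n\<ge>K. vanishes_upto q (len i n)"
    using lc_null_if_sums[OF sums] unfolding lc_null_def by blast
  then obtain K where K: "\<forall>i. \<forall>n\<ge>K i. vanishes_upto q (len i n)"
    by (rule choice[THEN exE])
  have "finite (prod_encode ` (SIGMA i:{..<I}. {..<K i}))"
    by simp
  then obtain N where N: "\<forall>j\<in>prod_encode ` (SIGMA i:{..<I}. {..<K i}). j < N"
    unfolding finite_nat_set_iff_bounded by blast
  have coords: "vanishes_upto q (len i n)" if "prod_encode (i, n) \<ge> N" for i n
  proof (cases "i \<ge> I")
    case True
    then show ?thesis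
      using vanishes_upto_if_nonneg_le[OF nonneg term_le_lc_sums[OF sums nonneg] I] by blast
  next
    case False
    have "n \<ge> K i"
    proof (rule ccontr)
      assume "\<not> n \<ge> K i"
      then have "prod_encode (i, n) < N"
        using False N by auto
      with that show False
        by simp
    qed
    then show ?thesis
      using K by blast
  qed
  have "vanishes_upto q (case_prod len (prod_decode j))" if "j \<ge> N" for j
  proof -
    obtain i n where ij: "prod_decode j = (i, n)"
      by fastforce
    then have "prod_encode (i, n) \<ge> N"
      using that by (metis prod_decode_inverse)
    then show ?thesis
      using ij coords by simp
  qed
  then show "\<exists>N. \<forall>j\<ge>N. vanishes_upto q (case_prod len (prod_decode j))"
    by blast
qed

lemma sum_diagonal_seq_le:
  fixes len :: "nat \<Rightarrow> nat \<Rightarrow> lc"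
  assumes nonneg: "\<And>i n. 0 \<le> len i n" and sums: "\<And>i. lc_sums (len i) (\<sigma> i)"
    and small: "\<And>i. i \<ge> k \<Longrightarrow> vanishes_upto q (\<sigma> i)"
  shows "(\<Sum>j<J. diagonal_seq len j) \<le> (\<Sum>i<k. \<sigma> i) + lc_monomial q"
proof -
  define F where "F = prod_decode ` {..<J}"
  have "finite F"
    unfolding F_def by simp
  then have "finite (snd ` F)"
    by simp
  then obtain K where K: "\<forall>n\<in>snd ` F. n < K"
    unfolding finite_nat_set_iff_bounded by blast
  have "(\<Sum>j<J. diagonal_seq len j) = sum (case_prod len) F"
    unfolding F_def diagonal_seq_def by (simp add: sum.reindex inj_prod_decode)
  also have "\<dots> = sum (case_prod len) (F \<inter> {p. fst p < k}) + sum (case_prod len) (F - {p. fst p < k})"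
    using \<open>finite F\<close> by (rule sum.Int_Diff)
  also have "\<dots> \<le> (\<Sum>i<k. \<sigma> i) + lc_monomial q"
  proof (rule add_mono)
    have "F \<inter> {p. fst p < k} \<subseteq> {..<k} \<times> {..<K}"
      using K by force
    then have "sum (case_prod len) (F \<inter> {p. fst p < k}) \<le> sum (case_prod len) ({..<k} \<times> {..<K})"
      by (rule sum_mono2[rotated]) (auto simp: nonneg)
    also have "\<dots> = (\<Sum>i<k. lc_psum (len i) K)"
      by (simp add: sum.cartesian_product lc_psum_eq_sum)
    also have "\<dots> \<le> (\<Sum>i<k. \<sigma> i)"
      by (intro sum_mono lc_psum_le_sums sums nonneg)
    finally show "sum (case_prod len) (F \<inter> {p. fst p < k}) \<le> (\<Sum>i<k. \<sigma> i)" .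
  next
    have "vanishes_upto q (len i n)" if "i \<ge> k" for i n
      using vanishes_upto_if_nonneg_le[OF nonneg term_le_lc_sums[OF sums nonneg] small[OF that]] .
    then have "vanishes_upto q (sum (case_prod len) (F - {p. fst p < k}))"
      by (intro vanishes_upto_sum) (auto simp: not_less)
    then show "sum (case_prod len) (F - {p. fst p < k}) \<le> lc_monomial q"
      by (intro less_imp_le less_monomial_if_vanishes_upto)
  qed
  finally show ?thesis .
qed

lemma cover_lengths_choice:
  assumes "\<And>i. \<sigma> i \<in> cover_lengths (D i)"
  shows "\<exists>a b S. \<forall>i. lc_cover (D i) (a i) (b i) (S i) \<and> lc_sums (\<lambda>n. b i n - a i n) (\<sigma> i)"
proof -
  have "\<forall>i. \<exists>w. lc_cover (D i) (fst w) (fst (snd w)) (snd (snd w))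
      \<and> lc_sums (\<lambda>n. fst (snd w) n - fst w n) (\<sigma> i)"
  proof
    fix i
    obtain a b S where "lc_cover (D i) a b S" "lc_sums (\<lambda>n. b n - a n) (\<sigma> i)"
      using assms[of i] unfolding cover_lengths_def by blast
    then show "\<exists>w. lc_cover (D i) (fst w) (fst (snd w)) (snd (snd w))
        \<and> lc_sums (\<lambda>n. fst (snd w) n - fst w n) (\<sigma> i)"
      by (intro exI[of _ "(a, b, S)"]) simp
  qed
  then obtain w where "\<forall>i. lc_cover (D i) (fst (w i)) (fst (snd (w i))) (snd (snd (w i)))
      \<and> lc_sums (\<lambda>n. fst (snd (w i)) n - fst (w i) n) (\<sigma> i)"
    by (rule choice[THEN exE])
  then show ?thesis
    by (intro exI[of _ "\<lambda>i. fst (w i)"] exI[of _ "\<lambda>i. fst (snd (w i))"]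
        exI[of _ "\<lambda>i. snd (snd (w i))"])
qed

text \<open>The covers of the \<open>D i\<close> are glued along the Cantor enumeration of \<open>\<nat> \<times> \<nat>\<close>. The
  glued lengths still form a null sequence, so their series converges, and its partial sums
  are bounded by the first \<open>k\<close> values \<open>\<sigma> i\<close> plus a tail vanishing up to \<open>q\<close>.\<close>
lemma cover_lengths_UNION_le:
  assumes cl: "\<And>i. \<sigma> i \<in> cover_lengths (D i)" and null: "lc_null \<sigma>"
    and small: "\<And>i. i \<ge> k \<Longrightarrow> vanishes_upto q (\<sigma> i)"
  shows "\<exists>T\<in>cover_lengths (\<Union>i. D i). T \<le> (\<Sum>i<k. \<sigma> i) + lc_monomial q"
proof -
  obtain a b S where cover: "\<And>i. lc_cover (D i) (a i) (b i) (S i)"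
    and sums: "\<And>i. lc_sums (\<lambda>n. b i n - a i n) (\<sigma> i)"
  proof -
    have "\<exists>a b S. \<forall>i. lc_cover (D i) (a i) (b i) (S i) \<and> lc_sums (\<lambda>n. b i n - a i n) (\<sigma> i)"
      by (rule cover_lengths_choice) (rule cl)
    then show ?thesis
      using that by blast
  qed
  define len where "len i n = b i n - a i n" for i n
  have nonneg: "0 \<le> len i n" for i n
    unfolding len_def using cover_length_pos[OF cover] by (rule less_imp_le)
  have sums': "lc_sums (len i) (\<sigma> i)" for i
    unfolding len_def by (rule sums)
  have lengths: "(\<lambda>j. diagonal_seq b j - diagonal_seq a j) = diagonal_seq len"
    by (simp add: fun_eq_iff diagonal_seq_def len_def case_prod_beta)
  obtain T where T: "lc_sums (\<lambda>j. diagonal_seq b j - diagonal_seq a j) T"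
    unfolding lengths using lc_sums_if_null[OF lc_null_diagonal_seq[OF nonneg sums' null]] ..
  have "lc_cover (\<Union>i. D i) (diagonal_seq a) (diagonal_seq b) (diagonal_seq S)"
    unfolding lc_cover_def
  proof (intro conjI allI subsetI)
    show "lc_interval (diagonal_seq a j) (diagonal_seq b j) (diagonal_seq S j)" for j
      using cover unfolding lc_cover_def diagonal_seq_def by (simp add: case_prod_beta)
    show "x \<in> (\<Union>j. diagonal_seq S j)" if x: "x \<in> (\<Union>i. D i)" for x
    proof -
      obtain i where "x \<in> D i"
        using x by blast
      then obtain n where "x \<in> S i n"
        using cover[of i] unfolding lc_cover_def by blast
      then have "x \<in> diagonal_seq S (prod_encode (i, n))"
        unfolding diagonal_seq_def by simp
      then show ?thesis
        by blast
    qed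
  qed (use T in blast)
  then have "T \<in> cover_lengths (\<Union>i. D i)"
    unfolding cover_lengths_def using T by blast
  moreover have "T \<le> (\<Sum>i<k. \<sigma> i) + lc_monomial q"
  proof (rule lc_tendsto_le_bound[of _ T 0])
    show "lc_tendsto (lc_psum (\<lambda>j. diagonal_seq b j - diagonal_seq a j)) T"
      using T unfolding lc_sums_def .
    show "lc_psum (\<lambda>j. diagonal_seq b j - diagonal_seq a j) J \<le> (\<Sum>i<k. \<sigma> i) + lc_monomial q" for J
      unfolding lengths lc_psum_eq_sum by (rule sum_diagonal_seq_le[OF nonneg sums' small])
  qed
  ultimately show ?thesis
    by blast
qed

lemma Mu_UNION_le:
  assumes om: "\<And>i. outer_measurable (D i)" and null: "lc_null (\<lambda>i. Mu (D i))"
    and small: "\<And>i. i \<ge> k \<Longrightarrow> vanishes_upto (q + 1) (Mu (D i))"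
  shows "\<exists>T\<in>cover_lengths (\<Union>i. D i). T \<le> (\<Sum>i<k. Mu (D i)) + lc_monomial q"
proof -
  define e where "e i = lc_monomial (q + 2 + of_nat i)" for i :: nat
  have e_small: "vanishes_upto (q + 1 + of_nat i) (e i)" for i
    unfolding e_def by (rule vanishes_upto_monomial) simp
  have "\<forall>i. \<exists>s. s \<in> cover_lengths (D i) \<and> s < Mu (D i) + e i"
    unfolding e_def using cover_length_near_Mu[OF om] by blast
  then obtain \<sigma> where \<sigma>: "\<forall>i. \<sigma> i \<in> cover_lengths (D i) \<and> \<sigma> i < Mu (D i) + e i"
    by (rule choice[THEN exE])
  have nonneg: "0 \<le> \<sigma> i" for i
    using \<sigma> cover_lengths_nonneg by blast
  have le: "\<sigma> i \<le> Mu (D i) + e i" for i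
    using \<sigma> less_imp_le by blast
  have "lc_null e"
    using e_small by (rule lc_null_if_vanishes_upto_shifted[of 0])
  then have "lc_null (\<lambda>i. Mu (D i) + e i)"
    by (rule lc_null_add[OF null])
  with nonneg le have "lc_null \<sigma>"
    by (rule lc_null_if_nonneg_le)
  moreover have "vanishes_upto (q + 1) (\<sigma> i)" if "i \<ge> k" for i
  proof (rule vanishes_upto_if_nonneg_le[OF nonneg le])
    show "vanishes_upto (q + 1) (Mu (D i) + e i)"
      using small[OF that] e_small[of i] by (simp add: vanishes_upto_add vanishes_upto_anti_mono)
  qed
  ultimately obtain T where T: "T \<in> cover_lengths (\<Union>i. D i)"
    and T_le: "T \<le> (\<Sum>i<k. \<sigma> i) + lc_monomial (q + 1)"
    using \<sigma> cover_lengths_UNION_le[of \<sigma> D k "q + 1"] by blast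
  have "(\<Sum>i<k. e i) \<le> lc_monomial (q + 1)"
    unfolding e_def
    by (intro less_imp_le less_monomial_if_vanishes_upto vanishes_upto_sum vanishes_upto_monomial)
      (simp add: add_pos_nonneg)
  moreover have "(\<Sum>i<k. \<sigma> i) \<le> (\<Sum>i<k. Mu (D i)) + (\<Sum>i<k. e i)"
    using sum_mono[of "{..<k}" \<sigma> "\<lambda>i. Mu (D i) + e i"] le by (simp add: sum.distrib)
  ultimately have "(\<Sum>i<k. \<sigma> i) \<le> (\<Sum>i<k. Mu (D i)) + lc_monomial (q + 1)"
    by (meson add_left_mono order_trans)
  with T_le have "T \<le> (\<Sum>i<k. Mu (D i)) + (lc_monomial (q + 1) + lc_monomial (q + 1))"
    by (metis add.assoc add_right_mono order_trans)
  also have "\<dots> \<le> (\<Sum>i<k. Mu (D i)) + lc_monomial q"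
    using monomial_add_self_less[of q] by simp
  finally show ?thesis
    using T by blast
qed

lemma cover_lengths_Un_le:
  assumes "s \<in> cover_lengths P" "t \<in> cover_lengths Q"
  shows "\<exists>T\<in>cover_lengths (P \<union> Q). T \<le> s + t + lc_monomial q"
proof -
  have "\<forall>i::nat. \<exists>e. e \<in> cover_lengths {} \<and> vanishes_upto (q + of_nat i) e"
    using cover_lengths_empty_vanishing by blast
  then obtain e where e: "\<forall>i. e i \<in> cover_lengths {} \<and> vanishes_upto (q + of_nat i) (e i)"
    by (rule choice[THEN exE])
  define D where "D i = (if i = 0 then P else if i = 1 then Q else {})" for i :: nat
  define \<sigma> where "\<sigma> i = (if i = 0 then s else if i = 1 then t else e i)" for i :: nat
  have cl: "\<sigma> i \<in> cover_lengths (D i)" for i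
    using assms e unfolding D_def \<sigma>_def by simp
  have small: "vanishes_upto (q + of_nat i) (\<sigma> i)" if "i \<ge> 2" for i
    using e that unfolding \<sigma>_def by simp
  then have "lc_null \<sigma>"
    by (rule lc_null_if_vanishes_upto_shifted)
  moreover have "vanishes_upto q (\<sigma> i)" if "i \<ge> 2" for i
    using small[OF that] by (rule vanishes_upto_anti_mono) simp
  ultimately obtain T where "T \<in> cover_lengths (\<Union>i. D i)" "T \<le> (\<Sum>i<2. \<sigma> i) + lc_monomial q"
    using cover_lengths_UNION_le[of \<sigma> D, OF cl] by blast
  moreover have "(\<Sum>i<2. \<sigma> i) = s + t"
    by (simp add: \<sigma>_def numeral_2_eq_2)
  moreover have "(\<Union>i. D i) = P \<union> Q"
  proof
    show "(\<Union>i. D i) \<subseteq> P \<union> Q"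
      unfolding D_def by auto
    show "P \<union> Q \<subseteq> (\<Union>i. D i)"
      using UN_upper[of 0 UNIV D] UN_upper[of 1 UNIV D] unfolding D_def by auto
  qed
  ultimately show ?thesis
    by auto
qed

lemma Mu_Un_le:
  assumes "outer_measurable P" "outer_measurable Q"
  shows "\<exists>T\<in>cover_lengths (P \<union> Q). T \<le> Mu P + Mu Q + lc_monomial q"
proof -
  obtain s t where s: "s \<in> cover_lengths P" "s < Mu P + lc_monomial (q + 2)"
    and t: "t \<in> cover_lengths Q" "t < Mu Q + lc_monomial (q + 2)"
    using cover_length_near_Mu[OF assms(1)] cover_length_near_Mu[OF assms(2)] by metis
  obtain T where T: "T \<in> cover_lengths (P \<union> Q)" "T \<le> s + t + lc_monomial (q + 1)"
    using cover_lengths_Un_le[OF s(1) t(1)] by blast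
  have "T \<le> (Mu P + lc_monomial (q + 2)) + (Mu Q + lc_monomial (q + 2)) + lc_monomial (q + 1)"
    using T(2) s(2) t(2) by (meson add_mono order_trans order_refl less_imp_le)
  also have "\<dots> = Mu P + Mu Q + ((lc_monomial (q + 2) + lc_monomial (q + 2)) + lc_monomial (q + 1))"
    by (simp add: algebra_simps)
  also have "\<dots> \<le> Mu P + Mu Q + (lc_monomial (q + 1) + lc_monomial (q + 1))"
    using monomial_add_self_less[of "q + 1"] by (simp add: add.assoc)
  also have "\<dots> \<le> Mu P + Mu Q + lc_monomial q"
    using monomial_add_self_less[of q] by simp
  finally show ?thesis
    using T(1) by blast
qed

lemma Mu_le_cover_length_add_Mu:
  assumes "outer_measurable B" "outer_measurable Q" "B \<subseteq> P \<union> Q" "s \<in> cover_lengths P"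
  shows "Mu B \<le> s + Mu Q"
proof (rule le_if_le_add_monomial)
  fix q
  obtain t where t: "t \<in> cover_lengths Q" "t < Mu Q + lc_monomial (q + 1)"
    using cover_length_near_Mu[OF assms(2)] by blast
  obtain T where T: "T \<in> cover_lengths (P \<union> Q)" "T \<le> s + t + lc_monomial (q + 1)"
    using cover_lengths_Un_le[OF assms(4) t(1)] by blast
  have "Mu B \<le> T"
    using Mu_le_cover_length[OF assms(1)] cover_lengths_antimono[OF assms(3)] T(1) by blast
  also have "\<dots> \<le> s + (Mu Q + lc_monomial (q + 1)) + lc_monomial (q + 1)"
    using T(2) t(2) by (meson add_mono order_trans order_refl less_imp_le)
  also have "\<dots> = s + Mu Q + (lc_monomial (q + 1) + lc_monomial (q + 1))"
    by (simp add: algebra_simps)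
  also have "\<dots> \<le> s + Mu Q + lc_monomial q"
    using monomial_add_self_less[of q] by simp
  finally show "Mu B \<le> s + Mu Q + lc_monomial q" .
qed

section \<open>Caratheodory sets and the limit of the measures\<close>

definition caratheodory :: "lc set \<Rightarrow> bool" where
  "caratheodory A \<longleftrightarrow> (\<forall>B. outer_measurable B \<longrightarrow>
     outer_measurable (A \<inter> B) \<and> outer_measurable (- A \<inter> B) \<and>
     Mu B = Mu (A \<inter> B) + Mu (- A \<inter> B))"

lemma L_measurable_iff: "L_measurable A \<longleftrightarrow> outer_measurable A \<and> caratheodory A"
  unfolding L_measurable_def caratheodory_def by blast

lemma caratheodory_empty: "caratheodory {}"
  unfolding caratheodory_def by (simp add: outer_measurable_empty Mu_empty)

lemma caratheodory_Un:
  assumes A1: "caratheodory A1" and A2: "caratheodory A2"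
  shows "caratheodory (A1 \<union> A2)"
  unfolding caratheodory_def
proof (intro allI impI)
  fix B
  assume B: "outer_measurable B"
  define B1 where "B1 = A1 \<inter> B"
  define B2 where "B2 = - A1 \<inter> B"
  define B21 where "B21 = A2 \<inter> B2"
  define B22 where "B22 = - A2 \<inter> B2"
  have om1: "outer_measurable B1" "outer_measurable B2" and split1: "Mu B = Mu B1 + Mu B2"
    using A1 B unfolding caratheodory_def B1_def B2_def by blast+
  have om2: "outer_measurable B21" "outer_measurable B22" and split2: "Mu B2 = Mu B21 + Mu B22"
    using A2 om1(2) unfolding caratheodory_def B21_def B22_def by blast+
  have "outer_measurable (B1 \<union> B21) \<and> Mu (B1 \<union> B21) = Mu B1 + Mu B21"
  proof (rule outer_measurable_MuI)
    fix s
    assume "s \<in> cover_lengths (B1 \<union> B21)"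
    moreover have "B \<subseteq> (B1 \<union> B21) \<union> B22"
      unfolding B1_def B21_def B22_def B2_def by blast
    ultimately have "Mu B \<le> s + Mu B22"
      by (intro Mu_le_cover_length_add_Mu[OF B om2(2)])
    then show "Mu B1 + Mu B21 \<le> s"
      using split1 split2 by (simp add: algebra_simps)
  next
    show "\<exists>s\<in>cover_lengths (B1 \<union> B21). s \<le> Mu B1 + Mu B21 + lc_monomial q" for q
      using Mu_Un_le[OF om1(1) om2(1)] .
  qed
  moreover have "(A1 \<union> A2) \<inter> B = B1 \<union> B21" "- (A1 \<union> A2) \<inter> B = B22"
    unfolding B1_def B21_def B22_def B2_def by auto
  ultimately show "outer_measurable ((A1 \<union> A2) \<inter> B) \<and> outer_measurable (- (A1 \<union> A2) \<inter> B)
      \<and> Mu B = Mu ((A1 \<union> A2) \<inter> B) + Mu (- (A1 \<union> A2) \<inter> B)"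
    using om2(2) split1 split2 by (simp add: add.assoc)
qed

lemma UN_atLeastAtMost_Suc: "(\<Union>n\<in>{1..Suc N}. A n) = (\<Union>n\<in>{1..N}. A n) \<union> A (Suc N)"
  by (auto simp: atLeastAtMostSuc_conv)

lemma caratheodory_UN_atLeastAtMost:
  fixes A :: "nat \<Rightarrow> lc set"
  assumes "\<And>n. n \<ge> 1 \<Longrightarrow> caratheodory (A n)"
  shows "caratheodory (\<Union>n\<in>{1..N}. A n)"
proof (induction N)
  case 0
  show ?case
    by (simp add: caratheodory_empty)
next
  case (Suc N)
  then show ?case
    unfolding UN_atLeastAtMost_Suc using caratheodory_Un assms[of "Suc N"] by simp
qed

lemma Mu_Int_Un_increment_bounds:
  assumes "caratheodory U" "outer_measurable (X \<inter> (U \<union> A))" "outer_measurable A"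
  shows "0 \<le> Mu (X \<inter> (U \<union> A)) - Mu (X \<inter> U)" "Mu (X \<inter> (U \<union> A)) - Mu (X \<inter> U) \<le> Mu A"
proof -
  let ?Y = "X \<inter> (U \<union> A)"
  have om: "outer_measurable (- U \<inter> ?Y)" and split: "Mu ?Y = Mu (U \<inter> ?Y) + Mu (- U \<inter> ?Y)"
    using assms(1,2) unfolding caratheodory_def by blast+
  have "U \<inter> ?Y = X \<inter> U" "- U \<inter> ?Y \<subseteq> A"
    by auto
  then show "0 \<le> Mu ?Y - Mu (X \<inter> U)" "Mu ?Y - Mu (X \<inter> U) \<le> Mu A"
    using split Mu_nonneg[OF om] Mu_mono[OF om assms(3)] by simp_all
qed

lemma lc_tendsto_if_increments_le:
  assumes nonneg: "\<And>n. 0 \<le> m (Suc n) - m n" and le: "\<And>n. m (Suc n) - m n \<le> d n"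
    and null: "lc_null d"
  shows "\<exists>L. lc_tendsto m L \<and> (\<forall>n. m n \<le> L)"
proof -
  have "lc_null (\<lambda>n. m (Suc n) - m n)"
    using nonneg le null by (rule lc_null_if_nonneg_le)
  then have "\<exists>L. lc_tendsto m L"
    unfolding lc_null_def
    by (intro lc_Cauchy_convergent) (meson vanishes_upto_diff_if_increments)
  then obtain L where L: "lc_tendsto m L"
    by blast
  have mono: "m n \<le> m (Suc n)" for n
    using nonneg[of n] by simp
  have "m n \<le> L" for n
    by (rule lc_tendsto_ge_bound[OF L, of n]) (rule lift_Suc_mono_le[of m, OF mono])
  with L show ?thesis
    by blast
qed

text \<open>The cover of \<open>Z\<close> that shows \<open>Mu Z \<le> L\<close> is glued from a near-optimal cover of
  \<open>C N\<close> and near-optimal covers of the tail sets \<open>E (N + i)\<close>, whose measures are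
  negligible once \<open>N\<close> is large.\<close>
lemma Mu_eq_limit_of_exhaustion:
  assumes om: "\<And>N. outer_measurable (C N)" and sub: "\<And>N. C N \<subseteq> Z"
    and exhaust: "\<And>N. Z \<subseteq> C N \<union> (\<Union>i. E (N + i))"
    and omE: "\<And>n. outer_measurable (E n)" and null: "lc_null (\<lambda>n. Mu (E n))"
    and lim: "lc_tendsto (\<lambda>N. Mu (C N)) L" and bound: "\<And>N. Mu (C N) \<le> L"
  shows "outer_measurable Z \<and> Mu Z = L"
proof (rule outer_measurable_MuI)
  fix s
  assume "s \<in> cover_lengths Z"
  then have "Mu (C N) \<le> s" for N
    using Mu_le_cover_length[OF om] cover_lengths_antimono[OF sub] by blast
  then show "L \<le> s"
    by (rule lc_tendsto_le_bound[OF lim, of 0])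
next
  fix q
  obtain N where N: "\<And>n. n \<ge> N \<Longrightarrow> vanishes_upto (q + 1) (Mu (E n))"
    using null unfolding lc_null_def by blast
  define D where "D = case_nat (C N) (\<lambda>i. E (N + i))"
  have "(\<lambda>i. Mu (D i)) = case_nat (Mu (C N)) (\<lambda>i. Mu (E (N + i)))"
    unfolding D_def by (simp add: fun_eq_iff split: nat.split)
  then have "lc_null (\<lambda>i. Mu (D i))"
    using lc_null_case_nat[OF null] by simp
  moreover have "vanishes_upto (q + 1) (Mu (D i))" if "i \<ge> 1" for i
    using that N unfolding D_def by (cases i) auto
  moreover have "outer_measurable (D i)" for i
    using om omE unfolding D_def by (cases i) auto
  ultimately obtain T where "T \<in> cover_lengths (\<Union>i. D i)" "T \<le> (\<Sum>i<1. Mu (D i)) + lc_monomial q"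
    using Mu_UNION_le[of D 1 q] by blast
  moreover have "(\<Sum>i<1. Mu (D i)) \<le> L"
    unfolding D_def by (simp add: bound)
  moreover have "Z \<subseteq> (\<Union>i. D i)"
  proof
    fix x
    assume "x \<in> Z"
    then have "x \<in> D 0 \<or> (\<exists>i. x \<in> D (Suc i))"
      using exhaust[of N] unfolding D_def by auto
    then show "x \<in> (\<Union>i. D i)"
      by blast
  qed
  ultimately show "\<exists>s\<in>cover_lengths Z. s \<le> L + lc_monomial q"
    using cover_lengths_antimono by (meson add_right_mono order_trans subsetD)
qed

lemma Int_UN_atLeast_subset:
  fixes A :: "nat \<Rightarrow> 'a set"
  shows "X \<inter> (\<Union>n\<in>{1..}. A n) \<subseteq> X \<inter> (\<Union>n\<in>{1..N}. A n) \<union> (\<Union>i. A (Suc (N + i)))"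
proof
  fix x
  assume "x \<in> X \<inter> (\<Union>n\<in>{1..}. A n)"
  then obtain n where x: "x \<in> X" "n \<ge> 1" "x \<in> A n"
    by auto
  show "x \<in> X \<inter> (\<Union>n\<in>{1..N}. A n) \<union> (\<Union>i. A (Suc (N + i)))"
  proof (cases "n \<le> N")
    case True
    then show ?thesis
      using x by auto
  next
    case False
    then have "n = Suc (N + (n - Suc N))"
      by simp
    then show ?thesis
      using x by (metis UN_iff UNIV_I UnI2)
  qed
qed

theorem lemma4p1:
  fixes A :: "nat \<Rightarrow> lc set" and X :: "lc set"
  assumes "\<forall>n\<ge>1. L_measurable (A n)"
    and "lc_tendsto (\<lambda>n. M (A (n + 1))) 0"
    and "outer_measurable X"
  shows "outer_measurable (X \<inter> (\<Union>n\<in>{1..}. A n))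
    \<and> (\<forall>N. outer_measurable (X \<inter> (\<Union>n\<in>{1..N}. A n)))
    \<and> (\<exists>L. lc_tendsto (\<lambda>N. Mu (X \<inter> (\<Union>n\<in>{1..N}. A n))) L)
    \<and> lc_tendsto (\<lambda>N. Mu (X \<inter> (\<Union>n\<in>{1..N}. A n))) (Mu (X \<inter> (\<Union>n\<in>{1..}. A n)))"
proof -
  define U where "U N = (\<Union>n\<in>{1..N}. A n)" for N
  have car: "caratheodory (U N)" for N
    unfolding U_def using assms(1) caratheodory_UN_atLeastAtMost L_measurable_iff by blast
  have omA: "outer_measurable (A (Suc n))" for n
    using assms(1) L_measurable_iff by simp
  have om: "outer_measurable (X \<inter> U N)" for N
    using car[of N] assms(3) unfolding caratheodory_def by (simp add: Int_commute)
  have null: "lc_null (\<lambda>n. Mu (A (Suc n)))"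
    using assms(2) unfolding lc_tendsto_iff_null M_def by simp
  have "0 \<le> Mu (X \<inter> U (Suc N)) - Mu (X \<inter> U N)"
    and "Mu (X \<inter> U (Suc N)) - Mu (X \<inter> U N) \<le> Mu (A (Suc N))" for N
    using Mu_Int_Un_increment_bounds[OF car[of N, unfolded U_def]
        om[of "Suc N", unfolded U_def UN_atLeastAtMost_Suc] omA]
    unfolding U_def UN_atLeastAtMost_Suc by simp_all
  then obtain L where L: "lc_tendsto (\<lambda>N. Mu (X \<inter> U N)) L" "\<And>N. Mu (X \<inter> U N) \<le> L"
    using lc_tendsto_if_increments_le[of "\<lambda>N. Mu (X \<inter> U N)", OF _ _ null] by blast
  have "outer_measurable (X \<inter> (\<Union>n\<in>{1..}. A n)) \<and> Mu (X \<inter> (\<Union>n\<in>{1..}. A n)) = L"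
  proof (rule Mu_eq_limit_of_exhaustion[OF om _ _ omA null L])
    show "X \<inter> U N \<subseteq> X \<inter> (\<Union>n\<in>{1..}. A n)" for N
      unfolding U_def by auto
    show "X \<inter> (\<Union>n\<in>{1..}. A n) \<subseteq> X \<inter> U N \<union> (\<Union>i. A (Suc (N + i)))" for N
      unfolding U_def by (rule Int_UN_atLeast_subset)
  qed
  with L om show ?thesis
    unfolding U_def by auto
qed

end
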